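(* Let $G$ be a bounded metric operator in $\mathcal H$ and $S$ a closed densely defined operator in $\mathcal H$. Define $K$ on $D(K)=G^{1/2}D(S)$ by $K\xi=G^{1/2}SG^{-1/2}\xi$. Then $K$ is densely defined and $K^*=G^{-1/2}S^*G^{1/2}$, the latter operator being defined on its natural domain $\{\eta\in\mathcal H: G^{1/2}\eta\in D(S^* ),\ S^*G^{1/2}\eta\in D(G^{-1/2})\}$.
   Context: A metric operator in $\mathcal H$ is a self-adjoint operator $G$ with $\langle G\xi,\xi\rangle>0$ for all nonzero $\xi\in D(G)$; it is injective, and $G^{-1/2}$ denotes the (possibly unbounded) inverse of $G^{1/2}$. *)

theory Defs
  imports "HOL-Analysis.Analysis"
begin

text \<open>HOL-Analysis only provides real inner product spaces, so we introduce complex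
inner product spaces as a type class (inner product linear in the first argument,
conjugate linear in the second), and complex Hilbert spaces as complete ones.\<close>

class complex_inner = real_normed_vector +
  fixes scaleC :: "complex \<Rightarrow> 'a \<Rightarrow> 'a"
  fixes cinner :: "'a \<Rightarrow> 'a \<Rightarrow> complex"
  assumes scaleC_scaleR: "scaleC (complex_of_real r) x = scaleR r x"
    and scaleC_add_right: "scaleC a (x + y) = scaleC a x + scaleC a y"
    and scaleC_add_left: "scaleC (a + b) x = scaleC a x + scaleC b x"
    and scaleC_scaleC: "scaleC a (scaleC b x) = scaleC (a * b) x"
    and scaleC_one: "scaleC 1 x = x"
    and cinner_commute: "cinner x y = cnj (cinner y x)"
    and cinner_add_left: "cinner (x + y) z = cinner x z + cinner y z"
    and cinner_scaleC_left: "cinner (scaleC a x) y = a * cinner x y"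
    and cinner_self_nonneg: "0 \<le> Re (cinner x x)"
    and cinner_eq_zero_iff: "cinner x x = 0 \<longleftrightarrow> x = 0"
    and norm_eq_sqrt_cinner: "norm x = sqrt (Re (cinner x x))"

class chilbert_space = complex_inner + complete_space

text \<open>An operator in H is represented by its graph T :: ('a \<times> 'a) set; its domain is
Domain T.  Equality of operators is equality of graphs (same domain, same values).\<close>

definition linear_op :: "('a::complex_inner \<times> 'a) set \<Rightarrow> bool" where
  "linear_op T \<longleftrightarrow>
     (0, 0) \<in> T \<and>
     (\<forall>x1 y1 x2 y2. (x1, y1) \<in> T \<longrightarrow> (x2, y2) \<in> T \<longrightarrow> (x1 + x2, y1 + y2) \<in> T) \<and>
     (\<forall>c x y. (x, y) \<in> T \<longrightarrow> (scaleC c x, scaleC c y) \<in> T) \<and>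
     (\<forall>x y z. (x, y) \<in> T \<longrightarrow> (x, z) \<in> T \<longrightarrow> y = z)"

definition densely_defined :: "('a::complex_inner \<times> 'a) set \<Rightarrow> bool" where
  "densely_defined T \<longleftrightarrow> closure (Domain T) = UNIV"

definition closed_op :: "('a::complex_inner \<times> 'a) set \<Rightarrow> bool" where
  "closed_op T \<longleftrightarrow> closed T"

definition adjoint_op :: "('a::complex_inner \<times> 'a) set \<Rightarrow> ('a \<times> 'a) set" where
  "adjoint_op T = {(y, z). \<forall>x w. (x, w) \<in> T \<longrightarrow> cinner w y = cinner x z}"

definition op_comp :: "('a \<times> 'a) set \<Rightarrow> ('a \<times> 'a) set \<Rightarrow> ('a \<times> 'a) set" where
  "op_comp A B = {(x, z). \<exists>y. (x, y) \<in> B \<and> (y, z) \<in> A}"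

definition op_inv :: "('a \<times> 'a) set \<Rightarrow> ('a \<times> 'a) set" where
  "op_inv T = converse T"

definition graph :: "('a \<Rightarrow> 'a) \<Rightarrow> ('a \<times> 'a) set" where
  "graph f = {(x, f x) | x. True}"

definition cbounded_linear :: "('a::complex_inner \<Rightarrow> 'a) \<Rightarrow> bool" where
  "cbounded_linear f \<longleftrightarrow>
     (\<forall>x y. f (x + y) = f x + f y) \<and> (\<forall>c x. f (scaleC c x) = scaleC c (f x)) \<and>
     (\<exists>K. \<forall>x. norm (f x) \<le> norm x * K)"

definition selfadjoint_bdd :: "('a::complex_inner \<Rightarrow> 'a) \<Rightarrow> bool" where
  "selfadjoint_bdd f \<longleftrightarrow> (\<forall>x y. cinner (f x) y = cinner x (f y))"

definition bounded_metric_op :: "('a::complex_inner \<Rightarrow> 'a) \<Rightarrow> bool" where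
  "bounded_metric_op g \<longleftrightarrow> cbounded_linear g \<and> selfadjoint_bdd g \<and>
     (\<forall>x. x \<noteq> 0 \<longrightarrow> Im (cinner (g x) x) = 0 \<and> 0 < Re (cinner (g x) x))"

definition op_sqrt :: "('a::complex_inner \<Rightarrow> 'a) \<Rightarrow> ('a \<Rightarrow> 'a)" where
  "op_sqrt g = (THE r. cbounded_linear r \<and> selfadjoint_bdd r \<and>
                       (\<forall>x. 0 \<le> Re (cinner (r x) x)) \<and> r \<circ> r = g)"

end

theory Submission
  imports Defs "HOL-Computational_Algebra.Formal_Power_Series"
begin

text \<open>
  With \<open>R = sqrt G\<close>, the graph of \<open>K\<close> is \<open>{(R y, R z) | (y, z) \<in> S}\<close>. Since \<open>R\<close> is bounded and
  self-adjoint, \<open>\<langle>R z, \<eta>\<rangle> = \<langle>R y, \<zeta>\<rangle>\<close> for all \<open>(y, z) \<in> S\<close> says exactly that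
  \<open>(R \<eta>, R \<zeta>) \<in> S\<^sup>*\<close>, which is the formula for \<open>K\<^sup>*\<close>. \<open>K\<close> is densely defined because \<open>R\<close> is continuous with dense range:
  the orthogonal complement of its range is its kernel, which is trivial since \<open>G\<close> is injective.

  Most of the work is the existence and uniqueness of \<open>R\<close>. After scaling, \<open>G = s (1 - B)\<close> with
  \<open>\<parallel>B\<parallel> \<le> 1\<close>, and \<open>sqrt (G / s) = \<Sum>\<^sub>n c\<^sub>n B\<^sup>n\<close> with the binomial coefficients of \<open>sqrt (1 - z)\<close>; these
  are non-positive after \<open>c\<^sub>0 = 1\<close> and have non-negative partial sums, so the series converges
  absolutely, and its Cauchy square is \<open>1 - B\<close> by Vandermonde's identity. Any
  positive square root commutes with \<open>G\<close>, hence with \<open>R\<close>, and two commuting ones coincide.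
\<close>


section \<open>Complex inner product spaces\<close>

lemma cinner_zero_left [simp]: "cinner 0 y = 0"
  using cinner_add_left[of 0 0 y] by simp

lemma cinner_zero_right [simp]: "cinner x 0 = 0"
  by (metis cinner_commute cinner_zero_left complex_cnj_zero)

lemma cinner_add_right: "cinner x (y + z) = cinner x y + cinner x z"
  by (metis cinner_commute cinner_add_left complex_cnj_add)

lemma cinner_scaleC_right: "cinner x (scaleC a y) = cnj a * cinner x y"
  by (metis cinner_commute cinner_scaleC_left complex_cnj_mult)

lemma cinner_minus_left: "cinner (- x) y = - cinner x y"
  using cinner_add_left[of x "- x" y] add.inverse_unique[of "cinner x y"] by simp

lemma cinner_diff_left: "cinner (x - y) z = cinner x z - cinner y z"
  using cinner_add_left[of x "- y" z] by (simp add: cinner_minus_left)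

lemma cinner_diff_right: "cinner x (y - z) = cinner x y - cinner x z"
  by (metis cinner_commute cinner_diff_left complex_cnj_diff)

lemma scaleR_eq_scaleC: "scaleR r x = scaleC (complex_of_real r) x"
  by (simp add: scaleC_scaleR)

lemma cinner_scaleR_left: "cinner (scaleR r x) y = complex_of_real r * cinner x y"
  by (simp add: scaleR_eq_scaleC cinner_scaleC_left)

lemma cinner_scaleR_right: "cinner x (scaleR r y) = complex_of_real r * cinner x y"
  by (simp add: scaleR_eq_scaleC cinner_scaleC_right)

lemma Re_cinner_commute: "Re (cinner y x) = Re (cinner x y)"
  by (subst cinner_commute) simp

lemma cinner_self_eq_norm: "cinner x x = complex_of_real ((norm x)\<^sup>2)"
proof -
  have "Im (cinner x x) = 0"
    by (metis cinner_commute cnj.sel(2) neg_equal_zero)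
  then show ?thesis
    by (simp add: complex_eq_iff norm_eq_sqrt_cinner cinner_self_nonneg)
qed

lemma power2_norm_eq_cinner: "(norm x)\<^sup>2 = Re (cinner x x)"
  by (simp add: cinner_self_eq_norm)

lemma power2_norm_diff_cinner:
  "(norm (x - y))\<^sup>2 = (norm x)\<^sup>2 - 2 * Re (cinner x y) + (norm y)\<^sup>2"
  unfolding power2_norm_eq_cinner
  by (simp add: cinner_diff_left cinner_diff_right Re_cinner_commute[of y x])

lemma power2_norm_add_cinner:
  "(norm (x + y))\<^sup>2 = (norm x)\<^sup>2 + 2 * Re (cinner x y) + (norm y)\<^sup>2"
  unfolding power2_norm_eq_cinner
  by (simp add: cinner_add_left cinner_add_right Re_cinner_commute[of y x])

lemma scaleC_diff_right: "scaleC a (x - y) = scaleC a x - scaleC a y"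
  by (metis add_diff_cancel diff_add_cancel scaleC_add_right)

lemma norm_scaleC: "norm (scaleC a x) = cmod a * norm x"
proof -
  have "cinner (scaleC a x) (scaleC a x) = a * cnj a * cinner x x"
    by (simp add: cinner_scaleC_left cinner_scaleC_right mult.assoc)
  then have "(norm (scaleC a x))\<^sup>2 = Re (a * cnj a * cinner x x)"
    by (simp only: power2_norm_eq_cinner)
  also have "\<dots> = (cmod a * norm x)\<^sup>2"
    by (simp add: cinner_self_eq_norm power_mult_distrib flip: complex_norm_square of_real_mult)
  finally show ?thesis
    by (simp add: power2_eq_iff_nonneg)
qed

definition positive_op :: "('a::complex_inner \<Rightarrow> 'a) \<Rightarrow> bool" where
  "positive_op T \<longleftrightarrow> (\<forall>x y. T (x + y) = T x + T y) \<and> (\<forall>c x. T (scaleC c x) = scaleC c (T x)) \<and>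
     selfadjoint_bdd T \<and> (\<forall>x. 0 \<le> Re (cinner (T x) x))"

lemma positive_op_id: "positive_op (\<lambda>x. x)"
  by (simp add: positive_op_def selfadjoint_bdd_def cinner_self_nonneg)

lemma nonneg_quadratic_imp_le:
  fixes a b p :: real
  assumes "0 \<le> p" "0 \<le> b" and quad: "\<And>t. 0 \<le> a - 2 * t * p + t\<^sup>2 * p * b"
  shows "p \<le> a * b"
proof (cases "b = 0")
  case True
  have "\<not> 0 < p"
  proof
    assume "0 < p"
    with quad[of "(a + 1) / (2 * p)"] True show False
      by (simp add: field_simps)
  qed
  with True show ?thesis by simp
next
  case False
  with \<open>0 \<le> b\<close> have "0 < b" by simp
  with quad[of "1 / b"] show ?thesis
    by (simp add: field_simps power2_eq_square)
qed

lemma positive_op_Cauchy_Schwarz: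
  assumes T: "positive_op T"
  shows "(cmod (cinner (T x) y))\<^sup>2 \<le> Re (cinner (T x) x) * Re (cinner (T y) y)"
proof -
  define c where "c = cinner (T x) y"
  have add: "T (u + v) = T u + T v" and sc: "T (scaleC a u) = scaleC a (T u)"
    and sa: "cinner (T u) v = cinner u (T v)" and pos: "0 \<le> Re (cinner (T u) u)" for u v a
    using T unfolding positive_op_def selfadjoint_bdd_def by auto
  have diff: "T (u - v) = T u - T v" for u v
    by (metis add eq_diff_eq)
  have yx: "cinner (T y) x = cnj c"
    by (simp add: c_def sa cinner_commute[of y])
  have "0 \<le> Re (cinner (T x) x) - 2 * t * (cmod c)\<^sup>2 + t\<^sup>2 * (cmod c)\<^sup>2 * Re (cinner (T y) y)"
    for t :: real
  proof -
    define s where "s = complex_of_real t * c"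
    let ?z = "x - scaleC s y"
    have "cinner (T ?z) ?z = cinner (T x) x - (s * cnj c + cnj s * c) + s * cnj s * cinner (T y) y"
      by (simp add: diff sc cinner_diff_left cinner_diff_right cinner_scaleC_left
          cinner_scaleC_right yx c_def[symmetric] algebra_simps)
    also have "s * cnj c + cnj s * c = complex_of_real (2 * t * (cmod c)\<^sup>2)"
      by (simp add: s_def algebra_simps flip: complex_norm_square)
    also have "s * cnj s = complex_of_real (t\<^sup>2 * (cmod c)\<^sup>2)"
      by (simp add: s_def algebra_simps power2_eq_square flip: complex_norm_square)
    finally show ?thesis
      using pos[of ?z] by simp
  qed
  then show ?thesis
    unfolding c_def[symmetric] by (intro nonneg_quadratic_imp_le) (auto simp: pos)
qed

lemma cinner_Cauchy_Schwarz: "cmod (cinner x y) \<le> norm x * norm y"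
proof -
  have "(cmod (cinner x y))\<^sup>2 \<le> (norm x * norm y)\<^sup>2"
    using positive_op_Cauchy_Schwarz[OF positive_op_id, of x y]
    by (simp add: power2_norm_eq_cinner power_mult_distrib)
  then show ?thesis
    by (rule power2_le_imp_le) simp
qed

lemma Re_cinner_le_norm: "Re (cinner x y) \<le> norm x * norm y"
  using cinner_Cauchy_Schwarz[of x y] complex_Re_le_cmod[of "cinner x y"] by linarith

lemma positive_op_norm_bound:
  assumes T: "positive_op T" and bound: "\<And>x. norm (T x) \<le> M * norm x"
  shows "(norm (T x))\<^sup>2 \<le> M * Re (cinner (T x) x)"
proof -
  define v where "v = T x"
  have pos: "0 \<le> Re (cinner (T x) x)"
    using T unfolding positive_op_def by blast
  have "cmod (cinner (T x) v) = (norm v)\<^sup>2"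
    by (simp add: v_def cinner_self_eq_norm norm_power)
  then have "(norm v)\<^sup>2 * (norm v)\<^sup>2 = (cmod (cinner (T x) v))\<^sup>2"
    by (simp add: power2_eq_square)
  also have "\<dots> \<le> Re (cinner (T x) x) * Re (cinner (T v) v)"
    by (rule positive_op_Cauchy_Schwarz[OF T])
  also have "\<dots> \<le> Re (cinner (T x) x) * (M * (norm v)\<^sup>2)"
  proof (rule mult_left_mono[OF _ pos])
    have "Re (cinner (T v) v) \<le> norm (T v) * norm v" by (rule Re_cinner_le_norm)
    also have "\<dots> \<le> M * norm v * norm v" using bound[of v] by (simp add: mult_right_mono)
    finally show "Re (cinner (T v) v) \<le> M * (norm v)\<^sup>2" by (simp add: power2_eq_square)
  qed
  finally have le: "(norm v)\<^sup>2 * (norm v)\<^sup>2 \<le> (M * Re (cinner (T x) x)) * (norm v)\<^sup>2"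
    by (simp add: algebra_simps)
  show ?thesis
  proof (cases "v = 0")
    case False
    then show ?thesis
      using mult_right_le_imp_le[OF le] by (simp add: v_def)
  qed (simp add: v_def)
qed

lemma bounded_linear_cinner_left: "bounded_linear (\<lambda>x. cinner x y)"
  by (rule bounded_linear_intro[of _ "norm y"])
     (auto simp: cinner_add_left cinner_scaleR_left scaleR_conv_of_real cinner_Cauchy_Schwarz)

lemma cbounded_linear_imp_bounded_linear: "cbounded_linear f \<Longrightarrow> bounded_linear f"
  unfolding cbounded_linear_def
  by (metis (no_types, lifting) bounded_linear_intro scaleR_eq_scaleC)

lemma bounded_linear_scaleC: "bounded_linear (scaleC c :: 'a::complex_inner \<Rightarrow> 'a)"
  by (rule bounded_linear_intro[of _ "cmod c"])
     (auto simp: scaleC_add_right scaleR_eq_scaleC scaleC_scaleC norm_scaleC mult.commute)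

lemma positive_op_scaleR:
  assumes T: "positive_op T" and "0 \<le> r"
  shows "positive_op (\<lambda>x. r *\<^sub>R T x)"
  unfolding positive_op_def selfadjoint_bdd_def
proof (intro conjI allI)
  fix x y c
  show "r *\<^sub>R T (x + y) = r *\<^sub>R T x + r *\<^sub>R T y"
    using T by (simp add: positive_op_def scaleR_add_right)
  show "r *\<^sub>R T (scaleC c x) = scaleC c (r *\<^sub>R T x)"
    using T by (simp add: positive_op_def scaleR_eq_scaleC scaleC_scaleC mult.commute)
  show "cinner (r *\<^sub>R T x) y = cinner x (r *\<^sub>R T y)"
    using T by (simp add: positive_op_def selfadjoint_bdd_def cinner_scaleR_left cinner_scaleR_right)
  show "0 \<le> Re (cinner (r *\<^sub>R T x) x)"
    using T \<open>0 \<le> r\<close> by (simp add: positive_op_def cinner_scaleR_left)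
qed


section \<open>The binomial series of the square root\<close>

text \<open>The coefficients of \<open>sqrt (1 - z) = (\<Sum>n. sqrt_coeff n * z ^ n)\<close>.\<close>

definition sqrt_coeff :: "nat \<Rightarrow> real" where
  "sqrt_coeff n = (- 1) ^ n * ((1 / 2) gchoose n)"

lemma sqrt_coeff_0 [simp]: "sqrt_coeff 0 = 1"
  by (simp add: sqrt_coeff_def)

lemma sqrt_coeff_Suc: "sqrt_coeff (Suc n) = sqrt_coeff n * ((real n - 1 / 2) / real (Suc n))"
proof -
  let ?G = "\<lambda>k. (1 / 2 :: real) gchoose k"
  have "real (Suc n) * ?G (Suc n) = (1 / 2 - real n) * ?G n"
    using gbinomial_mult_1[of "1 / 2 :: real" n] by (simp add: algebra_simps)
  then have G_Suc: "?G (Suc n) = (1 / 2 - real n) * ?G n / real (Suc n)"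
    by (simp add: eq_divide_eq mult.commute del: of_nat_Suc)
  show ?thesis
    unfolding sqrt_coeff_def power_Suc G_Suc by (simp add: field_simps del: of_nat_Suc)
qed

lemma sqrt_coeff_nonpos: "1 \<le> n \<Longrightarrow> sqrt_coeff n \<le> 0"
proof (induction n rule: dec_induct)
  case base
  show ?case by (simp add: sqrt_coeff_Suc[of 0])
next
  case (step n)
  then show ?case
    unfolding sqrt_coeff_Suc by (intro mult_nonpos_nonneg divide_nonneg_pos) auto
qed

lemma sum_sqrt_coeff_nonneg: "0 \<le> (\<Sum>k\<le>m. sqrt_coeff k)"
proof -
  have "(\<Sum>k\<le>m. sqrt_coeff k) = (- 1) ^ m * ((1 / 2 - 1 :: real) gchoose m)"
    unfolding sqrt_coeff_def by (subst gbinomial_sum_lower_neg[symmetric]) (simp add: mult.commute)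
  also have "((1 / 2 - 1 :: real) gchoose m) = (- 1) ^ m * ((real m - 1 / 2) gchoose m)"
    by (subst gbinomial_negated_upper) (simp add: algebra_simps)
  also have "(- 1) ^ m * ((- 1) ^ m * ((real m - 1 / 2) gchoose m)) = (real m - 1 / 2) gchoose m"
    by (simp flip: mult.assoc power_mult_distrib)
  also have "\<dots> \<ge> 0"
    unfolding gbinomial_prod_rev by (intro divide_nonneg_nonneg prod_nonneg) auto
  finally show ?thesis .
qed

lemma sum_abs_sqrt_coeff_le: "(\<Sum>k\<le>m. \<bar>sqrt_coeff k\<bar>) \<le> 2"
proof -
  have "(\<Sum>k\<le>m. \<bar>sqrt_coeff k\<bar>) = (\<Sum>k\<le>m. (if k = 0 then 2 else 0) - sqrt_coeff k)"
    by (intro sum.cong refl) (use sqrt_coeff_nonpos in \<open>auto simp: Suc_le_eq\<close>)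
  also have "\<dots> = 2 - (\<Sum>k\<le>m. sqrt_coeff k)"
    by (simp add: sum_subtractf)
  finally show ?thesis
    using sum_sqrt_coeff_nonneg[of m] by simp
qed

lemma summable_abs_sqrt_coeff: "summable (\<lambda>k. \<bar>sqrt_coeff k\<bar>)"
  by (rule bounded_imp_summable[of _ 2]) (auto intro: sum_abs_sqrt_coeff_le)

lemma summable_sqrt_coeff: "summable sqrt_coeff"
  using summable_abs_sqrt_coeff summable_rabs_cancel by blast

lemma suminf_sqrt_coeff_nonneg: "0 \<le> suminf sqrt_coeff"
proof -
  have "(\<lambda>m. \<Sum>k\<le>m. sqrt_coeff k) \<longlonglongrightarrow> suminf sqrt_coeff"
    using summable_sqrt_coeff by (simp add: summable_LIMSEQ' atLeast0AtMost)
  then show ?thesis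
    by (rule LIMSEQ_le_const) (simp add: sum_sqrt_coeff_nonneg)
qed

lemma sqrt_coeff_convolution:
  "(\<Sum>i\<le>k. sqrt_coeff i * sqrt_coeff (k - i)) = (if k = 0 then 1 else if k = 1 then - 1 else 0)"
proof -
  have "(\<Sum>i\<le>k. sqrt_coeff i * sqrt_coeff (k - i))
      = (- 1) ^ k * (\<Sum>i\<le>k. ((1 / 2 :: real) gchoose i) * ((1 / 2) gchoose (k - i)))"
    unfolding sqrt_coeff_def sum_distrib_left
    by (intro sum.cong refl) (simp add: algebra_simps flip: power_add)
  also have "\<dots> = (- 1) ^ k * ((1 / 2 + 1 / 2 :: real) gchoose k)"
    by (simp only: gbinomial_Vandermonde atMost_atLeast0)
  also have "\<dots> = (- 1) ^ k * of_nat (1 choose k)"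
    by (simp add: binomial_gbinomial)
  finally show ?thesis
    by (cases k) (auto simp: binomial_eq_0)
qed


section \<open>Cauchy products for bounded bilinear maps\<close>

lemma bounded_bilinear_summable_on_product:
  fixes a :: "nat \<Rightarrow> 'a::real_normed_vector" and b :: "nat \<Rightarrow> 'b::real_normed_vector"
    and h :: "'a \<Rightarrow> 'b \<Rightarrow> 'c::banach"
  assumes h: "bounded_bilinear h"
    and a: "summable (\<lambda>k. norm (a k))" and b: "summable (\<lambda>k. norm (b k))"
  shows "(\<lambda>(i, j). h (a i) (b j)) summable_on UNIV"
proof -
  obtain K where K0: "0 \<le> K" and K: "\<And>x y. norm (h x y) \<le> norm x * norm y * K"
    using bounded_bilinear.nonneg_bounded[OF h] by blast
  have norm_a: "(\<lambda>i. norm (a i)) summable_on UNIV" and norm_b: "(\<lambda>j. norm (b j)) summable_on UNIV"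
    using a b by (simp_all add: summable_on_UNIV_nonneg_real_iff)
  then have norm_b_has_sum: "((\<lambda>j. norm (b j)) has_sum (\<Sum>\<^sub>\<infinity>j. norm (b j))) UNIV"
    by simp
  have "(\<lambda>(i, j). norm (a i) * norm (b j) * K) summable_on Sigma UNIV (\<lambda>_. UNIV)"
    by (rule summable_on_SigmaI[where g = "\<lambda>i. norm (a i) * (\<Sum>\<^sub>\<infinity>j. norm (b j)) * K"])
       (auto intro!: has_sum_cmult_left has_sum_cmult_right summable_on_cmult_left norm_a norm_b_has_sum
         simp: K0)
  then have "(\<lambda>(i, j). norm (a i) * norm (b j) * K) summable_on UNIV"
    by simp
  then have "(\<lambda>x. norm ((\<lambda>(i, j). h (a i) (b j)) x)) summable_on UNIV"
    by (rule summable_on_comparison_test) (auto simp: K)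
  then show ?thesis
    by (rule abs_summable_summable)
qed

lemma bounded_bilinear_has_sum_product:
  fixes a :: "nat \<Rightarrow> 'a::banach" and b :: "nat \<Rightarrow> 'b::banach" and h :: "'a \<Rightarrow> 'b \<Rightarrow> 'c::banach"
  assumes h: "bounded_bilinear h"
    and a: "summable (\<lambda>k. norm (a k))" and b: "summable (\<lambda>k. norm (b k))"
  shows "((\<lambda>(i, j). h (a i) (b j)) has_sum h (\<Sum>k. a k) (\<Sum>k. b k)) UNIV"
proof -
  obtain L where L: "((\<lambda>(i, j). h (a i) (b j)) has_sum L) (Sigma UNIV (\<lambda>_. UNIV))"
    using bounded_bilinear_summable_on_product[OF assms] by (auto simp: summable_on_def)
  have a_has_sum: "(a has_sum (\<Sum>k. a k)) UNIV" and b_has_sum: "(b has_sum (\<Sum>k. b k)) UNIV"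
    using a b by (auto intro: norm_summable_imp_has_sum summable_norm_cancel)
  have "((\<lambda>i. h (a i) (\<Sum>k. b k)) has_sum L) UNIV"
    by (rule has_sum_SigmaD[OF L])
       (auto intro: has_sum_bounded_linear bounded_bilinear.bounded_linear_right[OF h] b_has_sum)
  moreover have "((\<lambda>i. h (a i) (\<Sum>k. b k)) has_sum h (\<Sum>k. a k) (\<Sum>k. b k)) UNIV"
    by (rule has_sum_bounded_linear[OF bounded_bilinear.bounded_linear_left[OF h] a_has_sum])
  ultimately have "L = h (\<Sum>k. a k) (\<Sum>k. b k)"
    by (rule has_sum_unique)
  with L show ?thesis
    by simp
qed

lemma bounded_bilinear_Cauchy_product_sums:
  fixes a :: "nat \<Rightarrow> 'a::banach" and b :: "nat \<Rightarrow> 'b::banach" and h :: "'a \<Rightarrow> 'b \<Rightarrow> 'c::banach"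
  assumes "bounded_bilinear h" and "summable (\<lambda>k. norm (a k))" and "summable (\<lambda>k. norm (b k))"
  shows "(\<lambda>k. \<Sum>i\<le>k. h (a i) (b (k - i))) sums h (\<Sum>k. a k) (\<Sum>k. b k)"
proof -
  have "bij_betw (\<lambda>(k :: nat, i). (i, k - i)) (Sigma UNIV atMost) (Sigma UNIV (\<lambda>_. UNIV))"
    by (rule bij_betw_byWitness[where f' = "\<lambda>(i, j). (i + j, i)"]) auto
  note reindex = has_sum_reindex_bij_betw[OF this, where f = "\<lambda>(i, j). h (a i) (b j)"]
  have "(\<lambda>x. (\<lambda>(i, j). h (a i) (b j)) (case x of (k, i) \<Rightarrow> (i, k - i)))
      = (\<lambda>(k, i). h (a i) (b (k - i)))"
    by auto
  then have "((\<lambda>(k, i). h (a i) (b (k - i))) has_sum h (\<Sum>k. a k) (\<Sum>k. b k)) (Sigma UNIV atMost)"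
    using reindex bounded_bilinear_has_sum_product[OF assms] by simp
  then have "((\<lambda>k. \<Sum>i\<le>k. h (a i) (b (k - i))) has_sum h (\<Sum>k. a k) (\<Sum>k. b k)) UNIV"
    by (rule has_sum_SigmaD) (auto intro: has_sum_finite)
  then show ?thesis
    by (rule has_sum_imp_sums)
qed


section \<open>Square roots of bounded positive operators\<close>

instance chilbert_space \<subseteq> banach ..

definition positive_sqrt :: "('a::complex_inner \<Rightarrow> 'a) \<Rightarrow> ('a \<Rightarrow> 'a) \<Rightarrow> bool" where
  "positive_sqrt T r \<longleftrightarrow>
     cbounded_linear r \<and> selfadjoint_bdd r \<and> (\<forall>x. 0 \<le> Re (cinner (r x) x)) \<and> r \<circ> r = T"

lemma positive_sqrt_imp_positive_op: "positive_sqrt T r \<Longrightarrow> positive_op r"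
  unfolding positive_sqrt_def positive_op_def cbounded_linear_def by blast

lemma positive_sqrt_scaleR:
  assumes r: "positive_sqrt T r" and "0 \<le> s"
  shows "positive_sqrt (\<lambda>x. s *\<^sub>R T x) (\<lambda>x. sqrt s *\<^sub>R r x)"
proof -
  have lin: "linear r"
    using r unfolding positive_sqrt_def by (blast intro: bounded_linear.linear cbounded_linear_imp_bounded_linear)
  obtain M where M: "\<And>x. norm (r x) \<le> norm x * M"
    using r unfolding positive_sqrt_def cbounded_linear_def by blast
  show ?thesis
    unfolding positive_sqrt_def cbounded_linear_def selfadjoint_bdd_def
  proof (intro conjI allI exI)
    fix x y c
    show "sqrt s *\<^sub>R r (x + y) = sqrt s *\<^sub>R r x + sqrt s *\<^sub>R r y"
      by (simp add: linear_add[OF lin] scaleR_add_right)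
    show "sqrt s *\<^sub>R r (scaleC c x) = scaleC c (sqrt s *\<^sub>R r x)"
      using r by (simp add: positive_sqrt_def cbounded_linear_def scaleR_eq_scaleC scaleC_scaleC mult.commute)
    show "norm (sqrt s *\<^sub>R r x) \<le> norm x * (sqrt s * M)"
      using mult_left_mono[OF M[of x] real_sqrt_ge_zero[OF \<open>0 \<le> s\<close>]]
      by (simp add: abs_of_nonneg[OF real_sqrt_ge_zero[OF \<open>0 \<le> s\<close>]] mult.left_commute)
    show "cinner (sqrt s *\<^sub>R r x) y = cinner x (sqrt s *\<^sub>R r y)"
      using r by (simp add: positive_sqrt_def selfadjoint_bdd_def cinner_scaleR_left cinner_scaleR_right)
    show "0 \<le> Re (cinner (sqrt s *\<^sub>R r x) x)"
      using r \<open>0 \<le> s\<close> by (simp add: positive_sqrt_def cinner_scaleR_left)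
    show "(\<lambda>x. sqrt s *\<^sub>R r x) \<circ> (\<lambda>x. sqrt s *\<^sub>R r x) = (\<lambda>x. s *\<^sub>R T x)"
      using r \<open>0 \<le> s\<close> by (auto simp: positive_sqrt_def fun_eq_iff linear_cmul[OF lin])
  qed
qed

locale positive_contraction =
  fixes A :: "'a::chilbert_space \<Rightarrow> 'a"
  assumes positive: "positive_op A" and contraction: "norm (A x) \<le> norm x"
begin

definition B :: "'a \<Rightarrow> 'a" where "B x = x - A x"

lemma B_add: "B (x + y) = B x + B y"
  using positive by (simp add: B_def positive_op_def algebra_simps)

lemma B_scaleC: "B (scaleC c x) = scaleC c (B x)"
  using positive by (simp add: B_def positive_op_def scaleC_diff_right)

lemma B_selfadjoint: "cinner (B x) y = cinner x (B y)"
  using positive by (simp add: B_def positive_op_def selfadjoint_bdd_def cinner_diff_left cinner_diff_right)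

lemma norm_B_le: "norm (B x) \<le> norm x"
proof -
  have "(norm (A x))\<^sup>2 \<le> 1 * Re (cinner (A x) x)"
    by (rule positive_op_norm_bound[OF positive]) (simp add: contraction)
  moreover have "(norm (B x))\<^sup>2 = (norm x)\<^sup>2 - 2 * Re (cinner (A x) x) + (norm (A x))\<^sup>2"
    unfolding B_def power2_norm_diff_cinner by (simp add: Re_cinner_commute)
  moreover have "0 \<le> Re (cinner (A x) x)"
    using positive by (simp add: positive_op_def)
  ultimately have "(norm (B x))\<^sup>2 \<le> (norm x)\<^sup>2" by linarith
  then show ?thesis by (rule power2_le_imp_le) simp
qed

lemma B_pow_scaleC: "(B ^^ n) (scaleC c x) = scaleC c ((B ^^ n) x)"
  by (induction n) (simp_all add: B_scaleC)

lemma B_pow_selfadjoint: "cinner ((B ^^ n) x) y = cinner x ((B ^^ n) y)"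
  by (induction n arbitrary: x y) (simp_all add: B_selfadjoint funpow_swap1)

lemma norm_B_pow_le: "norm ((B ^^ n) x) \<le> norm x"
  by (induction n) (auto intro: order_trans[OF norm_B_le])

lemma bounded_linear_B_pow: "bounded_linear (B ^^ n)"
proof (rule bounded_linear_intro[of _ 1])
  show "(B ^^ n) (x + y) = (B ^^ n) x + (B ^^ n) y" for x y
    by (induction n) (simp_all add: B_add)
  show "(B ^^ n) (r *\<^sub>R x) = r *\<^sub>R (B ^^ n) x" for r x
    by (simp add: scaleR_eq_scaleC B_pow_scaleC)
qed (simp add: norm_B_pow_le)

text \<open>\<open>root = sqrt A = sqrt (1 - B)\<close> is summed in the Banach space of bounded operators, so that
  the Cauchy product of the series with itself is available.\<close>

definition root_op :: "'a \<Rightarrow>\<^sub>L 'a" where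
  "root_op = (\<Sum>n. sqrt_coeff n *\<^sub>R Blinfun (B ^^ n))"

definition root :: "'a \<Rightarrow> 'a" where
  "root = blinfun_apply root_op"

lemma summable_norm_root_op_terms: "summable (\<lambda>n. norm (sqrt_coeff n *\<^sub>R Blinfun (B ^^ n)))"
proof (rule summable_comparison_test[OF _ summable_abs_sqrt_coeff], intro exI allI impI)
  fix n
  have "norm (Blinfun (B ^^ n)) \<le> 1"
    by (rule norm_blinfun_bound) (simp_all add: bounded_linear_Blinfun_apply[OF bounded_linear_B_pow] norm_B_pow_le)
  then show "norm (norm (sqrt_coeff n *\<^sub>R Blinfun (B ^^ n))) \<le> \<bar>sqrt_coeff n\<bar>"
    by (simp add: mult_left_le)
qed

lemma summable_norm_root_terms: "summable (\<lambda>n. norm (sqrt_coeff n *\<^sub>R (B ^^ n) x))"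
  by (rule summable_comparison_test[OF _ summable_mult2[OF summable_abs_sqrt_coeff, of "norm x"]])
     (auto intro!: mult_left_mono norm_B_pow_le)

lemma root_sums: "(\<lambda>n. sqrt_coeff n *\<^sub>R (B ^^ n) x) sums root x"
proof -
  have "(\<lambda>n. sqrt_coeff n *\<^sub>R Blinfun (B ^^ n)) sums root_op"
    unfolding root_op_def by (rule summable_sums[OF summable_norm_cancel[OF summable_norm_root_op_terms]])
  then have "(\<lambda>n. blinfun_apply (sqrt_coeff n *\<^sub>R Blinfun (B ^^ n)) x) sums root x"
    unfolding root_def
    by (rule bounded_linear.sums[OF bounded_bilinear.bounded_linear_left[OF bounded_bilinear_blinfun_apply]])
  then show ?thesis
    by (simp add: blinfun.scaleR_left bounded_linear_Blinfun_apply[OF bounded_linear_B_pow])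
qed

lemma bounded_linear_root: "bounded_linear root"
  unfolding root_def by (rule blinfun.bounded_linear_right)

lemma root_commute:
  assumes S: "bounded_linear S" and SA: "\<And>x. S (A x) = A (S x)"
  shows "S (root x) = root (S x)"
proof -
  have "S (B y) = B (S y)" for y
    by (simp add: B_def linear_diff[OF bounded_linear.linear[OF S]] SA)
  then have "S ((B ^^ n) y) = (B ^^ n) (S y)" for n y
    by (induction n) simp_all
  then have "(\<lambda>n. sqrt_coeff n *\<^sub>R (B ^^ n) (S x)) sums S (root x)"
    using bounded_linear.sums[OF S root_sums] by (simp add: linear_cmul[OF bounded_linear.linear[OF S]])
  then show ?thesis
    by (rule sums_unique2[OF _ root_sums])
qed

lemma root_scaleC: "root (scaleC c x) = scaleC c (root x)"
  using root_commute[of "scaleC c"] positive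
  by (simp add: positive_op_def bounded_linear_scaleC)

lemma root_selfadjoint: "cinner (root x) y = cinner x (root y)"
proof -
  have "(\<lambda>n. cinner (sqrt_coeff n *\<^sub>R (B ^^ n) x) y) sums cinner (root x) y"
    by (rule bounded_linear.sums[OF bounded_linear_cinner_left root_sums])
  moreover have "(\<lambda>n. cnj (cinner (sqrt_coeff n *\<^sub>R (B ^^ n) y) x)) sums cnj (cinner (root y) x)"
    by (rule sums_cnj[THEN iffD2, OF bounded_linear.sums[OF bounded_linear_cinner_left root_sums]])
  ultimately show ?thesis
    by (metis (no_types, lifting) B_pow_selfadjoint cinner_commute cinner_scaleR_left
        complex_cnj_complex_of_real complex_cnj_mult ext sums_unique2)
qed

lemma root_nonneg: "0 \<le> Re (cinner (root x) x)"
proof -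
  have "(\<lambda>n. cinner (sqrt_coeff n *\<^sub>R (B ^^ n) x) x) sums cinner (root x) x"
    by (rule bounded_linear.sums[OF bounded_linear_cinner_left root_sums])
  then have Re_sums: "(\<lambda>n. Re (cinner (sqrt_coeff n *\<^sub>R (B ^^ n) x) x)) sums Re (cinner (root x) x)"
    by (rule sums_Re)
  have coeff_sums: "(\<lambda>n. sqrt_coeff n * (norm x)\<^sup>2) sums (suminf sqrt_coeff * (norm x)\<^sup>2)"
    by (rule sums_mult2[OF summable_sums[OF summable_sqrt_coeff]])
  have le: "sqrt_coeff n * (norm x)\<^sup>2 \<le> Re (cinner (sqrt_coeff n *\<^sub>R (B ^^ n) x) x)" for n
  proof (cases "n = 0")
    case False
    have "Re (cinner ((B ^^ n) x) x) \<le> (norm x)\<^sup>2"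
      using Re_cinner_le_norm[of "(B ^^ n) x" x] norm_B_pow_le[of n x]
      by (simp add: power2_eq_square mult_right_mono order_trans)
    with False show ?thesis
      by (simp add: cinner_scaleR_left mult_left_mono_neg sqrt_coeff_nonpos)
  qed (simp add: power2_norm_eq_cinner)
  have "suminf sqrt_coeff * (norm x)\<^sup>2 \<le> Re (cinner (root x) x)"
    by (rule sums_le[OF le coeff_sums Re_sums])
  then show ?thesis
    by (rule order_trans[OF mult_nonneg_nonneg[OF suminf_sqrt_coeff_nonneg zero_le_power2]])
qed

lemma root_root: "root (root x) = A x"
proof -
  let ?a = "\<lambda>n. sqrt_coeff n *\<^sub>R Blinfun (B ^^ n)" and ?b = "\<lambda>n. sqrt_coeff n *\<^sub>R (B ^^ n) x"
  have "(\<lambda>k. \<Sum>i\<le>k. blinfun_apply (?a i) (?b (k - i))) sums blinfun_apply (\<Sum>k. ?a k) (\<Sum>k. ?b k)"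
    by (rule bounded_bilinear_Cauchy_product_sums[OF bounded_bilinear_blinfun_apply
          summable_norm_root_op_terms summable_norm_root_terms])
  moreover have "blinfun_apply (\<Sum>k. ?a k) (\<Sum>k. ?b k) = root (root x)"
    by (simp add: root_def root_op_def sums_unique[OF root_sums, symmetric])
  moreover have "(\<Sum>i\<le>k. blinfun_apply (?a i) (?b (k - i)))
      = (if k = 0 then x else 0) + (if k = 1 then - B x else 0)" for k
  proof -
    have "(\<Sum>i\<le>k. blinfun_apply (?a i) (?b (k - i)))
        = (\<Sum>i\<le>k. (sqrt_coeff i * sqrt_coeff (k - i)) *\<^sub>R (B ^^ k) x)"
    proof (intro sum.cong refl)
      fix i assume "i \<in> {..k}"
      then have "(B ^^ i) ((B ^^ (k - i)) x) = (B ^^ k) x"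
        by (metis atMost_iff funpow_add le_add_diff_inverse o_apply)
      then show "blinfun_apply (?a i) (?b (k - i)) = (sqrt_coeff i * sqrt_coeff (k - i)) *\<^sub>R (B ^^ k) x"
        by (simp add: blinfun.scaleR_left bounded_linear_Blinfun_apply[OF bounded_linear_B_pow]
            linear_cmul[OF bounded_linear.linear[OF bounded_linear_B_pow]])
    qed
    then show ?thesis
      by (simp add: scaleR_sum_left[symmetric] sqrt_coeff_convolution)
  qed
  ultimately have "(\<lambda>k. (if k = 0 then x else 0) + (if k = 1 then - B x else 0)) sums root (root x)"
    by simp
  moreover have "(\<lambda>k. (if k = 0 then x else 0) + (if k = 1 then - B x else 0)) sums (x + - B x)"
    using sums_add[OF sums_single[of 0 "\<lambda>_. x"] sums_single[of 1 "\<lambda>_. - B x"]] by simp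
  ultimately have "root (root x) = x + - B x"
    by (rule sums_unique2)
  then show ?thesis
    by (simp add: B_def)
qed

lemma positive_sqrt_root: "positive_sqrt A root"
  unfolding positive_sqrt_def cbounded_linear_def selfadjoint_bdd_def
proof (intro conjI allI)
  show "root (x + y) = root x + root y" for x y
    by (rule linear_add[OF bounded_linear.linear[OF bounded_linear_root]])
  show "\<exists>K. \<forall>x. norm (root x) \<le> norm x * K"
    by (rule bounded_linear.bounded[OF bounded_linear_root])
  show "0 \<le> Re (cinner (root x) x)" for x
    by (rule root_nonneg)
  show "root \<circ> root = A"
    by (simp add: fun_eq_iff root_root)
qed (simp_all add: root_scaleC root_selfadjoint)

end


text \<open>Two commuting positive square roots \<open>R, r\<close> of \<open>T\<close> coincide: \<open>v = R x - r x\<close> satisfies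
  \<open>R v + r v = 0\<close>, so \<open>R v = r v = 0\<close> by positivity, and \<open>\<parallel>v\<parallel>\<^sup>2 = \<langle>x, R v - r v\<rangle> = 0\<close>.\<close>

lemma positive_sqrt_unique_if_commute:
  assumes R: "positive_sqrt T R" and r: "positive_sqrt T r" and comm: "\<And>x. r (R x) = R (r x)"
  shows "r = R"
proof
  fix x
  have pos: "positive_op R" "positive_op r"
    using R r by (simp_all add: positive_sqrt_imp_positive_op)
  obtain M1 M2 where M: "\<And>x. norm (R x) \<le> M1 * norm x" "\<And>x. norm (r x) \<le> M2 * norm x"
    using R r unfolding positive_sqrt_def cbounded_linear_def by (metis mult.commute)
  have lin: "linear R" "linear r"
    using R r unfolding positive_sqrt_def
    by (simp_all add: bounded_linear.linear cbounded_linear_imp_bounded_linear)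
  have sq: "R (R y) = T y" "r (r y) = T y" for y
    using R r unfolding positive_sqrt_def by (auto simp: fun_eq_iff)
  have sa: "cinner (R a) b = cinner a (R b)" "cinner (r a) b = cinner a (r b)" for a b
    using R r unfolding positive_sqrt_def selfadjoint_bdd_def by auto
  define v where "v = R x - r x"
  have "R v + r v = 0"
    by (simp add: v_def linear_diff[OF lin(1)] linear_diff[OF lin(2)] sq comm)
  then have "Re (cinner (R v) v) + Re (cinner (r v) v) = 0"
    by (metis cinner_add_left cinner_zero_left plus_complex.sel(1) zero_complex.sel(1))
  moreover have "0 \<le> Re (cinner (R v) v)" "0 \<le> Re (cinner (r v) v)"
    using pos by (simp_all add: positive_op_def)
  ultimately have "Re (cinner (R v) v) = 0" "Re (cinner (r v) v) = 0"
    by linarith+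
  then have "(norm (R v))\<^sup>2 \<le> 0" "(norm (r v))\<^sup>2 \<le> 0"
    using positive_op_norm_bound[OF pos(1) M(1), of v] positive_op_norm_bound[OF pos(2) M(2), of v]
    by simp_all
  then have "R v = 0" "r v = 0"
    by simp_all
  then have "(norm v)\<^sup>2 = 0"
    by (simp add: power2_norm_eq_cinner v_def cinner_diff_left sa)
  then show "r x = R x"
    by (simp add: v_def)
qed

lemma positive_sqrt_exists:
  fixes T :: "'a::chilbert_space \<Rightarrow> 'a"
  assumes T: "positive_op T" "cbounded_linear T"
  obtains R where "positive_sqrt T R"
    and "\<And>S x. bounded_linear S \<Longrightarrow> (\<And>y. S (T y) = T (S y)) \<Longrightarrow> S (R x) = R (S x)"
proof -
  obtain K where K: "\<And>x. norm (T x) \<le> norm x * K"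
    using T(2) unfolding cbounded_linear_def by blast
  define s where "s = \<bar>K\<bar> + 1"
  have s: "0 < s" "\<bar>K\<bar> \<le> s"
    by (simp_all add: s_def add_pos_nonneg)
  define A where "A x = (1 / s) *\<^sub>R T x" for x
  interpret positive_contraction A
  proof
    show "positive_op A"
      unfolding A_def using s by (simp add: positive_op_scaleR T(1))
    show "norm (A x) \<le> norm x" for x
    proof -
      have "norm (T x) \<le> norm x * s"
        using K[of x] s(2) by (smt (verit) mult_left_mono norm_ge_zero)
      then show ?thesis
        using s(1) by (simp add: A_def divide_le_eq mult.commute)
    qed
  qed
  have "positive_sqrt (\<lambda>x. s *\<^sub>R A x) (\<lambda>x. sqrt s *\<^sub>R root x)"
    by (rule positive_sqrt_scaleR[OF positive_sqrt_root]) (use s(1) in simp)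
  then have "positive_sqrt T (\<lambda>x. sqrt s *\<^sub>R root x)"
    using s(1) by (simp add: A_def)
  moreover have "S (sqrt s *\<^sub>R root x) = sqrt s *\<^sub>R root (S x)"
    if S: "bounded_linear S" and ST: "\<And>y. S (T y) = T (S y)" for S x
  proof -
    have "S (A y) = A (S y)" for y
      by (simp add: A_def linear_cmul[OF bounded_linear.linear[OF S]] ST)
    then show ?thesis
      by (simp add: linear_cmul[OF bounded_linear.linear[OF S]] root_commute[OF S])
  qed
  ultimately show ?thesis
    by (rule that)
qed

lemma positive_sqrt_op_sqrt:
  fixes T :: "'a::chilbert_space \<Rightarrow> 'a"
  assumes "positive_op T" "cbounded_linear T"
  shows "positive_sqrt T (op_sqrt T)"
proof -
  obtain R where R: "positive_sqrt T R"
    and comm: "\<And>S x. bounded_linear S \<Longrightarrow> (\<And>y. S (T y) = T (S y)) \<Longrightarrow> S (R x) = R (S x)"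
    using positive_sqrt_exists[OF assms] by blast
  have "r = R" if r: "positive_sqrt T r" for r
  proof (rule positive_sqrt_unique_if_commute[OF R r])
    have "r \<circ> r = T" and "bounded_linear r"
      using r by (simp_all add: positive_sqrt_def cbounded_linear_imp_bounded_linear)
    then show "r (R x) = R (r x)" for x
      by (metis comm comp_apply)
  qed
  then have "op_sqrt T = R"
    unfolding op_sqrt_def positive_sqrt_def[symmetric] using R by blast
  with R show ?thesis
    by simp
qed


section \<open>Orthogonal projections and dense ranges\<close>

lemma parallelogram_midpoint:
  fixes v a b :: "'a::complex_inner"
  shows "(norm (a - b))\<^sup>2 =
    2 * (norm (v - a))\<^sup>2 + 2 * (norm (v - b))\<^sup>2 - 4 * (norm (v - (1 / 2) *\<^sub>R (a + b)))\<^sup>2"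
proof -
  define p q where "p = v - a" and "q = v - b"
  have "a - b = q - p"
    by (simp add: p_def q_def)
  then have "(norm (a - b))\<^sup>2 = (norm p)\<^sup>2 - 2 * Re (cinner p q) + (norm q)\<^sup>2"
    by (simp add: power2_norm_diff_cinner Re_cinner_commute[of q])
  moreover have "v - (1 / 2) *\<^sub>R (a + b) = (1 / 2) *\<^sub>R (p + q)"
    by (simp add: p_def q_def algebra_simps flip: scaleR_add_left)
  then have "(norm (v - (1 / 2) *\<^sub>R (a + b)))\<^sup>2 = ((norm p)\<^sup>2 + 2 * Re (cinner p q) + (norm q)\<^sup>2) / 4"
    by (simp add: power2_norm_add_cinner power_divide)
  ultimately show ?thesis
    by (simp add: p_def q_def)
qed

lemma minimizing_sequence_Cauchy:
  fixes M :: "'a::complex_inner set"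
  assumes "convex M" and s: "\<And>n. s n \<in> M" and lim: "(\<lambda>n. norm (v - s n)) \<longlonglongrightarrow> infdist v M"
  shows "Cauchy s"
proof (rule metric_CauchyI)
  fix \<epsilon> :: real assume "0 < \<epsilon>"
  define d where "d = infdist v M"
  have "(\<lambda>n. (norm (v - s n))\<^sup>2 - d\<^sup>2) \<longlonglongrightarrow> d\<^sup>2 - d\<^sup>2"
    unfolding d_def by (intro tendsto_intros lim)
  then have "eventually (\<lambda>n. (norm (v - s n))\<^sup>2 - d\<^sup>2 < \<epsilon>\<^sup>2 / 4) sequentially"
    by (rule order_tendstoD(2)) (use \<open>0 < \<epsilon>\<close> in simp)
  then obtain N where N: "\<And>n. N \<le> n \<Longrightarrow> (norm (v - s n))\<^sup>2 - d\<^sup>2 < \<epsilon>\<^sup>2 / 4"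
    by (auto simp: eventually_sequentially)
  have "d \<le> norm (v - (1 / 2) *\<^sub>R (s m + s n))" for m n
  proof -
    have "(1 / 2) *\<^sub>R (s m + s n) \<in> M"
      using convexD[OF \<open>convex M\<close> s s, of "1 / 2" "1 / 2"] by (simp add: scaleR_add_right)
    then show ?thesis
      unfolding d_def by (metis dist_norm infdist_le)
  qed
  then have mid: "d\<^sup>2 \<le> (norm (v - (1 / 2) *\<^sub>R (s m + s n)))\<^sup>2" for m n
    by (simp add: d_def infdist_nonneg power_mono)
  show "\<exists>N. \<forall>m\<ge>N. \<forall>n\<ge>N. dist (s m) (s n) < \<epsilon>"
  proof (intro exI allI impI)
    fix m n assume "N \<le> m" "N \<le> n"
    then have "(norm (s m - s n))\<^sup>2 < \<epsilon>\<^sup>2"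
      using parallelogram_midpoint[of "s m" "s n" v] N[of m] N[of n] mid[of m n] by linarith
    then show "dist (s m) (s n) < \<epsilon>"
      using power_less_imp_less_base[of _ 2 \<epsilon>] \<open>0 < \<epsilon>\<close> by (simp add: dist_norm)
  qed
qed

lemma infdist_minimizing_sequence:
  fixes M :: "'a::metric_space set"
  assumes "M \<noteq> {}"
  obtains s where "\<And>n. s n \<in> M" and "(\<lambda>n. dist v (s n)) \<longlonglongrightarrow> infdist v M"
proof -
  have "\<exists>m\<in>M. dist v m < infdist v M + 1 / Suc n" for n
  proof (rule ccontr)
    assume "\<not> ?thesis"
    then have "infdist v M + 1 / Suc n \<le> infdist v M"
      unfolding infdist_notempty[OF \<open>M \<noteq> {}\<close>] by (intro cINF_greatest \<open>M \<noteq> {}\<close>) auto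
    then show False
      by simp
  qed
  then obtain s where s: "\<And>n. s n \<in> M" and close: "\<And>n. dist v (s n) < infdist v M + 1 / Suc n"
    by metis
  have "(\<lambda>n. dist v (s n)) \<longlonglongrightarrow> infdist v M"
  proof (rule tendsto_sandwich[of "\<lambda>_. infdist v M" _ _ "\<lambda>n. infdist v M + 1 / Suc n"])
    show "(\<lambda>n. infdist v M + 1 / Suc n) \<longlonglongrightarrow> infdist v M"
      using tendsto_add[OF tendsto_const LIMSEQ_Suc[OF lim_inverse_n']] by simp
    show "eventually (\<lambda>n. infdist v M \<le> dist v (s n)) sequentially"
      by (intro always_eventually allI infdist_le s)
    show "eventually (\<lambda>n. dist v (s n) \<le> infdist v M + 1 / Suc n) sequentially"
      by (intro always_eventually allI less_imp_le close)
  qed simp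
  with s show ?thesis
    by (rule that)
qed

lemma closest_point_exists:
  fixes M :: "'a::chilbert_space set"
  assumes "closed M" "convex M" "M \<noteq> {}"
  obtains m where "m \<in> M" "\<And>m'. m' \<in> M \<Longrightarrow> norm (v - m) \<le> norm (v - m')"
proof -
  obtain s where s: "\<And>n. s n \<in> M" and lim: "(\<lambda>n. norm (v - s n)) \<longlonglongrightarrow> infdist v M"
    using infdist_minimizing_sequence[OF \<open>M \<noteq> {}\<close>, of v] unfolding dist_norm by blast
  then have "Cauchy s"
    by (rule minimizing_sequence_Cauchy[OF \<open>convex M\<close>])
  then obtain m where m: "s \<longlonglongrightarrow> m"
    using Cauchy_convergent convergent_def by blast
  then have "(\<lambda>n. norm (v - s n)) \<longlonglongrightarrow> norm (v - m)"
    by (intro tendsto_intros)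
  then have "norm (v - m) = infdist v M"
    using LIMSEQ_unique[OF lim] by simp
  moreover have "m \<in> M"
    using closed_sequentially[OF \<open>closed M\<close>] s m by blast
  ultimately show ?thesis
    using that by (metis dist_norm infdist_le)
qed

lemma cinner_eq_0_if_closest:
  assumes "\<And>t. norm w \<le> norm (w - scaleC t u)"
  shows "cinner w u = 0"
proof -
  define c where "c = cinner w u"
  have "0 \<le> 0 - 2 * t * (cmod c)\<^sup>2 + t\<^sup>2 * (cmod c)\<^sup>2 * (norm u)\<^sup>2" for t :: real
  proof -
    have "(norm w)\<^sup>2 \<le> (norm (w - scaleC (complex_of_real t * c) u))\<^sup>2"
      using assms by (simp add: power_mono)
    moreover have "Re (cinner w (scaleC (complex_of_real t * c) u)) = t * (cmod c)\<^sup>2"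
      by (simp add: cinner_scaleC_right c_def[symmetric] mult.assoc mult.commute[of "cnj c"]
          flip: complex_norm_square)
    ultimately show ?thesis
      by (simp add: power2_norm_diff_cinner norm_scaleC norm_mult power_mult_distrib)
  qed
  then have "(cmod c)\<^sup>2 \<le> 0 * (norm u)\<^sup>2"
    by (intro nonneg_quadratic_imp_le) simp_all
  then show ?thesis
    by (simp add: c_def)
qed

lemma closure_range_add:
  fixes f :: "'a::real_vector \<Rightarrow> 'b::real_normed_vector"
  assumes "linear f" and "m \<in> closure (range f)"
  shows "m + f y \<in> closure (range f)"
proof -
  have "(+) (f y) ` range f \<subseteq> range f"
  proof (rule image_subsetI)
    fix u assume "u \<in> range f"
    then obtain z where "u = f z"
      by blast
    then show "f y + u \<in> range f"
      using linear_add[OF \<open>linear f\<close>, of y z] by (metis rangeI)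
  qed
  then have "(+) (f y) ` closure (range f) \<subseteq> closure (range f)"
    unfolding closure_translation[symmetric] by (rule closure_mono)
  with assms(2) show ?thesis
    by (auto simp: add.commute)
qed

lemma dense_range_if_selfadjoint_injective:
  fixes R :: "'a::chilbert_space \<Rightarrow> 'a"
  assumes R: "cbounded_linear R" "selfadjoint_bdd R" and "inj R"
  shows "closure (range R) = UNIV"
proof (rule ccontr)
  assume "closure (range R) \<noteq> UNIV"
  then obtain v where v: "v \<notin> closure (range R)"
    by blast
  have lin: "linear R"
    using R(1) by (simp add: bounded_linear.linear cbounded_linear_imp_bounded_linear)
  have "convex (closure (range R))"
    by (intro convex_closure convex_linear_image[OF lin] convex_UNIV)
  then obtain m where m: "m \<in> closure (range R)"
    and closest: "\<And>m'. m' \<in> closure (range R) \<Longrightarrow> norm (v - m) \<le> norm (v - m')"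
    using closest_point_exists[of "closure (range R)" v] by blast
  have "cinner (v - m) (R y) = 0" for y
  proof (rule cinner_eq_0_if_closest)
    fix t
    have "norm (v - m) \<le> norm (v - (m + R (scaleC t y)))"
      by (rule closest[OF closure_range_add[OF lin m]])
    then show "norm (v - m) \<le> norm (v - m - scaleC t (R y))"
      using R(1) by (simp add: cbounded_linear_def algebra_simps)
  qed
  then have "cinner (R (v - m)) (R (v - m)) = 0"
    using R(2) by (simp add: selfadjoint_bdd_def)
  then have "R (v - m) = R 0"
    using lin by (simp add: cinner_eq_zero_iff linear_0)
  then show False
    using \<open>inj R\<close> v m by (auto dest: injD)
qed

lemma dense_image_if_dense:
  assumes "continuous_on UNIV f" "closure (range f) = UNIV" "closure D = UNIV"
  shows "closure (f ` D) = UNIV"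
proof -
  have "f ` closure D \<subseteq> closure (f ` D)"
    by (rule image_closure_subset[OF _ closed_closure closure_subset])
       (rule continuous_on_subset[OF assms(1) subset_UNIV])
  then have "closure (range f) \<subseteq> closure (f ` D)"
    by (simp add: assms(3) closure_minimal)
  then show ?thesis
    by (simp add: assms(2) top.extremum_unique)
qed


section \<open>Similarity transforms by the square root of a metric operator\<close>

lemma op_comp_graph_op_inv_graph:
  "op_comp (graph R) (op_comp S (op_inv (graph R))) = map_prod R R ` S"
  by (auto simp: op_comp_def op_inv_def graph_def image_iff)

lemma adjoint_op_map_prod:
  assumes "selfadjoint_bdd R"
  shows "adjoint_op (map_prod R R ` S) = op_comp (op_inv (graph R)) (op_comp (adjoint_op S) (graph R))"
proof -
  have "(\<eta>, \<zeta>) \<in> adjoint_op (map_prod R R ` S) \<longleftrightarrow> (R \<eta>, R \<zeta>) \<in> adjoint_op S" for \<eta> \<zeta>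
  proof -
    have "(\<eta>, \<zeta>) \<in> adjoint_op (map_prod R R ` S) \<longleftrightarrow>
        (\<forall>x w. (x, w) \<in> S \<longrightarrow> cinner (R w) \<eta> = cinner (R x) \<zeta>)"
      by (auto simp: adjoint_op_def)
    also have "\<dots> \<longleftrightarrow> (R \<eta>, R \<zeta>) \<in> adjoint_op S"
      using assms by (simp add: adjoint_op_def selfadjoint_bdd_def)
    finally show ?thesis .
  qed
  then show ?thesis
    by (auto simp: op_comp_def op_inv_def graph_def)
qed

lemma op_sqrt_bounded_metric_op:
  fixes g :: "'a::chilbert_space \<Rightarrow> 'a"
  assumes "bounded_metric_op g"
  shows "cbounded_linear (op_sqrt g)" "selfadjoint_bdd (op_sqrt g)" "inj (op_sqrt g)"
proof -
  have g: "cbounded_linear g" "selfadjoint_bdd g" "\<And>x. x \<noteq> 0 \<Longrightarrow> 0 < Re (cinner (g x) x)"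
    using assms by (simp_all add: bounded_metric_op_def)
  have "positive_op g"
    unfolding positive_op_def
  proof (intro conjI allI)
    show "g (x + y) = g x + g y" "g (scaleC c x) = scaleC c (g x)" for c x y
      using g(1) by (simp_all add: cbounded_linear_def)
    show "0 \<le> Re (cinner (g x) x)" for x
      using g(3)[of x] by (cases "x = 0") simp_all
  qed (fact g(2))
  then have R: "positive_sqrt g (op_sqrt g)"
    using g(1) by (rule positive_sqrt_op_sqrt)
  then show "cbounded_linear (op_sqrt g)" "selfadjoint_bdd (op_sqrt g)"
    by (simp_all add: positive_sqrt_def)
  have lin: "linear (op_sqrt g)"
    using R unfolding positive_sqrt_def by (blast intro: bounded_linear.linear cbounded_linear_imp_bounded_linear)
  have sq: "op_sqrt g (op_sqrt g z) = g z" for z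
    using R by (simp add: positive_sqrt_def fun_eq_iff)
  show "inj (op_sqrt g)"
  proof (rule injI)
    fix x y assume "op_sqrt g x = op_sqrt g y"
    then have "op_sqrt g (x - y) = 0"
      by (simp add: linear_diff[OF lin])
    then have "g (x - y) = 0"
      using sq[of "x - y"] linear_0[OF lin] by simp
    then show "x = y"
      using g(3)[of "x - y"] by fastforce
  qed
qed

theorem lemma5p5:
  fixes g :: "'a::chilbert_space \<Rightarrow> 'a" and S :: "('a \<times> 'a) set"
  assumes "bounded_metric_op g"
    and "linear_op S" and "closed_op S" and "densely_defined S"
  defines "K \<equiv> {(\<xi>, \<eta>). \<xi> \<in> op_sqrt g ` Domain S \<and>
              (\<xi>, \<eta>) \<in> op_comp (graph (op_sqrt g)) (op_comp S (op_inv (graph (op_sqrt g))))}"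
  shows "densely_defined K \<and>
         adjoint_op K = op_comp (op_inv (graph (op_sqrt g))) (op_comp (adjoint_op S) (graph (op_sqrt g)))"
proof -
  define R where "R = op_sqrt g"
  note R = op_sqrt_bounded_metric_op[OF assms(1), folded R_def]
  have K_eq: "K = map_prod R R ` S"
    unfolding K_def op_comp_graph_op_inv_graph R_def[symmetric] by force
  have "continuous_on UNIV R"
    using R(1) by (simp add: linear_continuous_on cbounded_linear_imp_bounded_linear)
  then have "closure (R ` Domain S) = UNIV"
    using dense_image_if_dense dense_range_if_selfadjoint_injective[OF R] assms(4)
    by (metis densely_defined_def)
  moreover have "Domain K = R ` Domain S"
    unfolding K_eq by force
  ultimately show ?thesis
    unfolding densely_defined_def K_eq R_def[symmetric] using adjoint_op_map_prod[OF R(2)] by simp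
qed

end
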